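(* Let $(F_S,\iota)$ be an embedded local étale algebra and $\Gamma\subseteq\mathrm{PGL}_2(F_S)$ a semi-simple plectic subgroup. Then the action of $\Gamma$ on $\mathcal T_\Gamma$ is proper: the stabilizer in $\Gamma$ of each polysimplex $\sigma$ of $\mathcal T_\Gamma$ is finite.
   Context: Fix a prime $p$ and let $\mathbf{C}$ be the completion of an algebraic closure of $\mathbb{Q}_p$ or of $\mathbb{F}_p((T))$. An embedded local étale algebra $(F_S,\iota)$ consists of a finite non-empty set $S$, non-Archimedean local fields $F_\mathfrak p$ ($\mathfrak p\in S$) of residue characteristic $p$ and the same characteristic as $\mathbf C$, and embeddings $\iota_\mathfrak p\colon F_\mathfrak p\hookrightarrow\mathbf C$ (so $\mathbb P^1(F_\mathfrak p)\subseteq\mathbb P^1(\mathbf C)$). $\mathrm{PGL}_2(F_S)=\prod_\mathfrak p\mathrm{PGL}_2(F_\mathfrak p)$ acts componentwise by Möbius transformations on $\prod_{\mathfrak p\in S}\mathbb P^1(\mathbf C)$. The limit set $\mathcal L^S_\Gamma$ of a subgroup $\Gamma$ is the set of $x$ with $\gamma_j(y)\to x$ for some $y$ and pairwise distinct $\gamma_j\in\Gamma$. $\Gamma$ is plectic if $\mathcal L^S_\Gamma=\bigcup_\mathfrak p\big(\mathcal L_{\Gamma,\mathfrak p}\times\prod_{\mathfrak q\ne\mathfrak p}\mathbb P^1(\mathbf C)\big)$ for some subsets $\mathcal L_{\Gamma,\mathfrak p}\subseteq\mathbb P^1(F_\mathfrak p)$, and semi-simple if moreover no $\mathcal L_{\Gamma,\mathfrak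 p}$ has exactly one element. For such $\Gamma$, $\mathcal T_{\Gamma,\mathfrak p}$ is a single vertex if $\mathcal L_{\Gamma,\mathfrak p}=\emptyset$, and otherwise the subtree of the Bruhat–Tits tree of $\mathrm{PGL}_2(F_\mathfrak p)$ (ends identified with $\mathbb P^1(F_\mathfrak p)$) formed by the union of all geodesics joining two distinct points of $\mathcal L_{\Gamma,\mathfrak p}$; it is stable under $\mathrm{pr}_\mathfrak p(\Gamma)$, and $\Gamma$ acts on the polysimplicial complex $\mathcal T_\Gamma=\prod_{\mathfrak p\in S}\mathcal T_{\Gamma,\mathfrak p}$, whose polysimplices are products of vertices and edges of the factors. *)

theory Defs
  imports Complex_Main "HOL-Computational_Algebra.Polynomial"
begin

definition nonarch_abs :: "('c::field \<Rightarrow> real) \<Rightarrow> bool" where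
  "nonarch_abs nv \<longleftrightarrow> nv 0 = 0 \<and> (\<forall>x. x \<noteq> 0 \<longrightarrow> nv x > 0)
     \<and> (\<forall>x y. nv (x * y) = nv x * nv y) \<and> (\<forall>x y. nv (x + y) \<le> max (nv x) (nv y))"

definition v_complete :: "('c::field \<Rightarrow> real) \<Rightarrow> bool" where
  "v_complete nv \<longleftrightarrow> (\<forall>X::nat \<Rightarrow> 'c.
     (\<forall>e>0. \<exists>N. \<forall>m\<ge>N. \<forall>n\<ge>N. nv (X m - X n) < e) \<longrightarrow>
     (\<exists>L. \<forall>e>0. \<exists>N. \<forall>n\<ge>N. nv (X n - L) < e))"

definition v_closure :: "('c::field \<Rightarrow> real) \<Rightarrow> 'c set \<Rightarrow> 'c set" where
  "v_closure nv A = {x. \<forall>e>0. \<exists>a\<in>A. nv (x - a) < e}"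

definition algebraic_over :: "'c::field set \<Rightarrow> 'c \<Rightarrow> bool" where
  "algebraic_over K x \<longleftrightarrow> (\<exists>f. f \<noteq> 0 \<and> (\<forall>i. coeff f i \<in> K) \<and> poly f x = 0)"

text \<open>C is (up to isometric isomorphism) the completion of an algebraic closure of
  Q_p (char 0, t = 1: K0 is the closure of Q, i.e. Q_p) or of F_p((t)) (char p):
  complete, algebraically closed, and the algebraic closure of K0 inside C is dense.\<close>

definition is_C :: "('c::field \<Rightarrow> real) \<Rightarrow> nat \<Rightarrow> bool" where
  "is_C nv p \<longleftrightarrow> prime p \<and> nonarch_abs nv \<and> v_complete nv
     \<and> (\<forall>f::'c poly. degree f > 0 \<longrightarrow> (\<exists>z. poly f z = 0))
     \<and> (\<exists>t. ((CHAR('c) = 0 \<and> t = 1 \<and> nv (of_nat p) < 1)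
              \<or> (CHAR('c) = p \<and> 0 < nv t \<and> nv t < 1))
         \<and> (let K0 = v_closure nv {poly f t / poly g t | f g.
                   (\<forall>i. coeff f i \<in> range of_int) \<and> (\<forall>i. coeff g i \<in> range of_int)}
            in \<forall>x. \<forall>e>0. \<exists>y. algebraic_over K0 y \<and> nv (x - y) < e))"

section \<open>Non-Archimedean local fields embedded in C (as closed subfields)\<close>

definition subfield :: "'c::field set \<Rightarrow> bool" where
  "subfield F \<longleftrightarrow> 0 \<in> F \<and> 1 \<in> F \<and> (\<forall>x\<in>F. \<forall>y\<in>F. x + y \<in> F \<and> x * y \<in> F)
     \<and> (\<forall>x\<in>F. - x \<in> F) \<and> (\<forall>x\<in>F. x \<noteq> 0 \<longrightarrow> inverse x \<in> F)"

definition v_closed :: "('c::field \<Rightarrow> real) \<Rightarrow> 'c set \<Rightarrow> bool" where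
  "v_closed nv F \<longleftrightarrow> v_closure nv F \<subseteq> F"

definition integers :: "('c::field \<Rightarrow> real) \<Rightarrow> 'c set \<Rightarrow> 'c set" where
  "integers nv F = {x \<in> F. nv x \<le> 1}"

definition uniformizer :: "('c::field \<Rightarrow> real) \<Rightarrow> 'c set \<Rightarrow> 'c \<Rightarrow> bool" where
  "uniformizer nv F \<pi> \<longleftrightarrow> \<pi> \<in> F \<and> 0 < nv \<pi> \<and> nv \<pi> < 1
     \<and> (\<forall>x\<in>F. x \<noteq> 0 \<longrightarrow> (\<exists>n::int. nv x = nv \<pi> powi n))"

text \<open>A non-Archimedean local field (continuously) embedded into C: a closed subfield,
  discretely valued, with finite residue field.\<close>
definition local_subfield :: "('c::field \<Rightarrow> real) \<Rightarrow> 'c set \<Rightarrow> bool" where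
  "local_subfield nv F \<longleftrightarrow> subfield F \<and> v_closed nv F \<and> (\<exists>\<pi>. uniformizer nv F \<pi>)
     \<and> (\<exists>R. finite R \<and> R \<subseteq> integers nv F \<and>
            (\<forall>x\<in>integers nv F. \<exists>r\<in>R. nv (x - r) < 1))"

text \<open>P^1(C) is 'c option, None being the point at infinity.\<close>
definition P1 :: "'c set \<Rightarrow> 'c option set" where
  "P1 F = insert None (Some ` F)"

type_synonym 'c mat2 = "'c \<times> 'c \<times> 'c \<times> 'c"

fun mmul :: "'c::field mat2 \<Rightarrow> 'c mat2 \<Rightarrow> 'c mat2" where
  "mmul (a,b,c,d) (e,f,g,h) = (a*e+b*g, a*f+b*h, c*e+d*g, c*f+d*h)"

fun mdet :: "'c::field mat2 \<Rightarrow> 'c" where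
  "mdet (a,b,c,d) = a*d - b*c"

fun madj :: "'c::field mat2 \<Rightarrow> 'c mat2" where
  "madj (a,b,c,d) = (d, -b, -c, a)"

fun msmul :: "'c::field \<Rightarrow> 'c mat2 \<Rightarrow> 'c mat2" where
  "msmul l (a,b,c,d) = (l*a, l*b, l*c, l*d)"

definition gl2 :: "'c::field set \<Rightarrow> 'c mat2 \<Rightarrow> bool" where
  "gl2 F M \<longleftrightarrow> (case M of (a,b,c,d) \<Rightarrow> a \<in> F \<and> b \<in> F \<and> c \<in> F \<and> d \<in> F) \<and> mdet M \<noteq> 0"

text \<open>An element of PGL_2(F) is the class of an invertible matrix modulo F^*.\<close>
definition pgl_class :: "'c::field set \<Rightarrow> 'c mat2 \<Rightarrow> 'c mat2 set" where
  "pgl_class F M = {msmul l M | l. l \<in> F \<and> l \<noteq> 0}"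

definition pgl2 :: "'c::field set \<Rightarrow> 'c mat2 set set" where
  "pgl2 F = {pgl_class F M | M. gl2 F M}"

text \<open>PGL_2(F_S) as functions on S (extensional: empty outside S).\<close>
definition pglS :: "'s set \<Rightarrow> ('s \<Rightarrow> 'c::field set) \<Rightarrow> ('s \<Rightarrow> 'c mat2 set) set" where
  "pglS S F = {g. (\<forall>s\<in>S. g s \<in> pgl2 (F s)) \<and> (\<forall>s. s \<notin> S \<longrightarrow> g s = {})}"

definition pgl_one :: "'s set \<Rightarrow> ('s \<Rightarrow> 'c::field set) \<Rightarrow> 's \<Rightarrow> 'c mat2 set" where
  "pgl_one S F = (\<lambda>s. if s \<in> S then pgl_class (F s) (1,0,0,1) else {})"

definition pgl_mult :: "('s \<Rightarrow> 'c::field mat2 set) \<Rightarrow> ('s \<Rightarrow> 'c mat2 set) \<Rightarrow> 's \<Rightarrow> 'c mat2 set" where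
  "pgl_mult g h = (\<lambda>s. {mmul M N | M N. M \<in> g s \<and> N \<in> h s})"

definition pgl_inv :: "('s \<Rightarrow> 'c::field mat2 set) \<Rightarrow> 's \<Rightarrow> 'c mat2 set" where
  "pgl_inv g = (\<lambda>s. madj ` g s)"

definition pgl_subgroup :: "'s set \<Rightarrow> ('s \<Rightarrow> 'c::field set) \<Rightarrow> ('s \<Rightarrow> 'c mat2 set) set \<Rightarrow> bool" where
  "pgl_subgroup S F \<Gamma> \<longleftrightarrow> \<Gamma> \<subseteq> pglS S F \<and> pgl_one S F \<in> \<Gamma>
     \<and> (\<forall>g\<in>\<Gamma>. \<forall>h\<in>\<Gamma>. pgl_mult g h \<in> \<Gamma>) \<and> (\<forall>g\<in>\<Gamma>. pgl_inv g \<in> \<Gamma>)"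

fun mob :: "'c::field mat2 \<Rightarrow> 'c option \<Rightarrow> 'c option" where
  "mob (a,b,c,d) None = (if c = 0 then None else Some (a / c))"
| "mob (a,b,c,d) (Some z) = (if c * z + d = 0 then None else Some ((a*z+b) / (c*z+d)))"

definition pmob :: "'c::field mat2 set \<Rightarrow> 'c option \<Rightarrow> 'c option" where
  "pmob g x = mob (SOME M. M \<in> g) x"

definition p1_tendsto :: "('c::field \<Rightarrow> real) \<Rightarrow> (nat \<Rightarrow> 'c option) \<Rightarrow> 'c option \<Rightarrow> bool" where
  "p1_tendsto nv X x \<longleftrightarrow> (case x of
      None \<Rightarrow> (\<forall>R. \<exists>N. \<forall>n\<ge>N. X n = None \<or> (\<exists>z. X n = Some z \<and> nv z > R))
    | Some a \<Rightarrow> (\<forall>e>0. \<exists>N. \<forall>n\<ge>N. \<exists>z. X n = Some z \<and> nv (z - a) < e))"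

text \<open>Limit set in prod_{s in S} P^1(C) (points as functions on S, None outside S);
  convergence in the product topology is componentwise.\<close>
definition limset :: "('c::field \<Rightarrow> real) \<Rightarrow> 's set \<Rightarrow> ('s \<Rightarrow> 'c mat2 set) set \<Rightarrow> ('s \<Rightarrow> 'c option) set" where
  "limset nv S \<Gamma> = {x. (\<forall>s. s \<notin> S \<longrightarrow> x s = None) \<and>
     (\<exists>y \<gamma>. inj (\<gamma> :: nat \<Rightarrow> 's \<Rightarrow> 'c mat2 set) \<and> range \<gamma> \<subseteq> \<Gamma> \<and>
        (\<forall>s\<in>S. p1_tendsto nv (\<lambda>j. pmob (\<gamma> j s) (y s)) (x s)))}"

definition semisimple_plectic_with ::
  "('c::field \<Rightarrow> real) \<Rightarrow> 's set \<Rightarrow> ('s \<Rightarrow> 'c set) \<Rightarrow> ('s \<Rightarrow> 'c mat2 set) set \<Rightarrow> ('s \<Rightarrow> 'c option set) \<Rightarrow> bool" where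
  "semisimple_plectic_with nv S F \<Gamma> Lp \<longleftrightarrow>
     (\<forall>s\<in>S. Lp s \<subseteq> P1 (F s)) \<and>
     limset nv S \<Gamma> = {x. (\<forall>s. s \<notin> S \<longrightarrow> x s = None) \<and> (\<exists>s\<in>S. x s \<in> Lp s)} \<and>
     (\<forall>s\<in>S. \<not> (\<exists>a. Lp s = {a}))"

section \<open>Bruhat--Tits tree of PGL_2(F) via homothety classes of lattices\<close>

definition vadd :: "'c::field \<times> 'c \<Rightarrow> 'c \<times> 'c \<Rightarrow> 'c \<times> 'c" where
  "vadd u w = (fst u + fst w, snd u + snd w)"

definition vscale :: "'c::field \<Rightarrow> 'c \<times> 'c \<Rightarrow> 'c \<times> 'c" where
  "vscale l u = (l * fst u, l * snd u)"

fun mapply :: "'c::field mat2 \<Rightarrow> 'c \<times> 'c \<Rightarrow> 'c \<times> 'c" where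
  "mapply (a,b,c,d) (x,y) = (a*x + b*y, c*x + d*y)"

text \<open>Ends of the tree are identified with P^1(F): z corresponds to the line through (z,1),
  infinity to the line through (1,0); compatible with mob.\<close>
fun pvec :: "'c::field option \<Rightarrow> 'c \<times> 'c" where
  "pvec None = (1, 0)"
| "pvec (Some z) = (z, 1)"

definition lat_span :: "('c::field \<Rightarrow> real) \<Rightarrow> 'c set \<Rightarrow> 'c \<times> 'c \<Rightarrow> 'c \<times> 'c \<Rightarrow> ('c \<times> 'c) set" where
  "lat_span nv F u w = {vadd (vscale a u) (vscale b w) | a b. a \<in> integers nv F \<and> b \<in> integers nv F}"

definition is_lattice :: "('c::field \<Rightarrow> real) \<Rightarrow> 'c set \<Rightarrow> ('c \<times> 'c) set \<Rightarrow> bool" where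
  "is_lattice nv F L \<longleftrightarrow> (\<exists>u w. u \<in> F \<times> F \<and> w \<in> F \<times> F \<and> fst u * snd w - snd u * fst w \<noteq> 0
      \<and> L = lat_span nv F u w)"

definition hclass :: "'c::field set \<Rightarrow> ('c \<times> 'c) set \<Rightarrow> ('c \<times> 'c) set set" where
  "hclass F L = {vscale l ` L | l. l \<in> F \<and> l \<noteq> 0}"

definition bt_vertex :: "('c::field \<Rightarrow> real) \<Rightarrow> 'c set \<Rightarrow> ('c \<times> 'c) set set \<Rightarrow> bool" where
  "bt_vertex nv F v \<longleftrightarrow> (\<exists>L. is_lattice nv F L \<and> v = hclass F L)"

definition bt_adjacent :: "('c::field \<Rightarrow> real) \<Rightarrow> 'c set \<Rightarrow> ('c \<times> 'c) set set \<Rightarrow> ('c \<times> 'c) set set \<Rightarrow> bool" where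
  "bt_adjacent nv F v w \<longleftrightarrow> bt_vertex nv F v \<and> bt_vertex nv F w \<and> v \<noteq> w \<and>
     (\<exists>L\<in>v. \<exists>L'\<in>w. \<exists>\<pi>. uniformizer nv F \<pi> \<and> vscale \<pi> ` L \<subset> L' \<and> L' \<subset> L)"

text \<open>Vertex v lies on the geodesic joining the ends a, b (a distinct from b): v is the class of
  a lattice O u + O w with u on the line of a and w on the line of b.\<close>
definition on_geod :: "('c::field \<Rightarrow> real) \<Rightarrow> 'c set \<Rightarrow> 'c option \<Rightarrow> 'c option \<Rightarrow> ('c \<times> 'c) set set \<Rightarrow> bool" where
  "on_geod nv F a b v \<longleftrightarrow> (\<exists>\<alpha> \<beta>. \<alpha> \<in> F \<and> \<alpha> \<noteq> 0 \<and> \<beta> \<in> F \<and> \<beta> \<noteq> 0 \<and>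
      v = hclass F (lat_span nv F (vscale \<alpha> (pvec a)) (vscale \<beta> (pvec b))))"

definition tree_verts :: "('c::field \<Rightarrow> real) \<Rightarrow> 'c set \<Rightarrow> 'c option set \<Rightarrow> ('c \<times> 'c) set set set" where
  "tree_verts nv F Ls = {v. \<exists>a\<in>Ls. \<exists>b\<in>Ls. a \<noteq> b \<and> on_geod nv F a b v}"

definition tree_edge :: "('c::field \<Rightarrow> real) \<Rightarrow> 'c set \<Rightarrow> 'c option set \<Rightarrow> ('c \<times> 'c) set set \<Rightarrow> ('c \<times> 'c) set set \<Rightarrow> bool" where
  "tree_edge nv F Ls v w \<longleftrightarrow> bt_adjacent nv F v w \<and>
     (\<exists>a\<in>Ls. \<exists>b\<in>Ls. a \<noteq> b \<and> on_geod nv F a b v \<and> on_geod nv F a b w)"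

definition pact :: "'c::field mat2 set \<Rightarrow> ('c \<times> 'c) set set \<Rightarrow> ('c \<times> 'c) set set" where
  "pact g v = {mapply M ` L | M L. M \<in> g \<and> L \<in> v}"

text \<open>A polysimplex of T_Gamma: for each s in S, the set of vertices of a vertex or an edge of
  T_{Gamma,s}; when Lp s is empty the factor is a single (abstract) vertex, encoded by {},
  on which Gamma acts trivially.\<close>
definition polysimplex :: "('c::field \<Rightarrow> real) \<Rightarrow> 's set \<Rightarrow> ('s \<Rightarrow> 'c set) \<Rightarrow> ('s \<Rightarrow> 'c option set)
     \<Rightarrow> ('s \<Rightarrow> ('c \<times> 'c) set set set) \<Rightarrow> bool" where
  "polysimplex nv S F Lp \<sigma> \<longleftrightarrow> (\<forall>s. s \<notin> S \<longrightarrow> \<sigma> s = {}) \<and>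
     (\<forall>s\<in>S. (Lp s = {} \<longrightarrow> \<sigma> s = {}) \<and>
        (Lp s \<noteq> {} \<longrightarrow> (\<exists>v. v \<in> tree_verts nv (F s) (Lp s) \<and> \<sigma> s = {v})
                       \<or> (\<exists>v w. tree_edge nv (F s) (Lp s) v w \<and> \<sigma> s = {v, w})))"

definition stabilizer :: "'s set \<Rightarrow> ('s \<Rightarrow> 'c::field mat2 set) set \<Rightarrow> ('s \<Rightarrow> 'c option set)
     \<Rightarrow> ('s \<Rightarrow> ('c \<times> 'c) set set set) \<Rightarrow> ('s \<Rightarrow> 'c mat2 set) set" where
  "stabilizer S \<Gamma> Lp \<sigma> = {g \<in> \<Gamma>. \<forall>s\<in>S. Lp s \<noteq> {} \<longrightarrow> pact (g s) ` \<sigma> s = \<sigma> s}"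

end

theory Submission
  imports Defs "HOL-Analysis.Abstract_Metric_Spaces" "HOL-Library.Infinite_Set"
begin

(* Suppose the stabilizer is infinite and pick an injective sequence in it. At a place p with
  non-empty local limit set, the sequence permutes the finitely many vertices of the factor
  \<sigma>_p, so along a subsequence it maps a fixed lattice class [L] to a fixed class [L']. Matrices
  representing these elements then have the form U' K_j U^-1 with K_j in GL_2(O_p), and
  compactness of GL_2(O_p) gives a further subsequence converging to some g in GL_2(F_p).
  Hence the orbit of a point w in C - F_p converges to g(w), which again lies outside F_p and
  thus outside the local limit set. At places with empty local limit set, compactness of
  P^1(F_p) suffices. A diagonal subsequence thus produces a point of the limit set lying in
  no L_p x prod P^1(C), contradicting plecticity. *)

lemma subfield_0: "subfield F \<Longrightarrow> 0 \<in> F"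
  and subfield_1: "subfield F \<Longrightarrow> 1 \<in> F"
  and subfield_add: "subfield F \<Longrightarrow> x \<in> F \<Longrightarrow> y \<in> F \<Longrightarrow> x + y \<in> F"
  and subfield_mult: "subfield F \<Longrightarrow> x \<in> F \<Longrightarrow> y \<in> F \<Longrightarrow> x * y \<in> F"
  and subfield_uminus: "subfield F \<Longrightarrow> x \<in> F \<Longrightarrow> - x \<in> F"
  by (simp_all add: subfield_def)

lemma subfield_diff: "subfield F \<Longrightarrow> x \<in> F \<Longrightarrow> y \<in> F \<Longrightarrow> x - y \<in> F"
  using subfield_add[of F x "- y"] subfield_uminus[of F y] by simp

lemma subfield_inverse: "subfield F \<Longrightarrow> x \<in> F \<Longrightarrow> inverse x \<in> F"
  by (cases "x = 0") (auto simp: subfield_def)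

lemma subfield_divide: "subfield F \<Longrightarrow> x \<in> F \<Longrightarrow> y \<in> F \<Longrightarrow> x / y \<in> F"
  by (simp add: divide_inverse subfield_mult subfield_inverse)

lemma subfield_power: "subfield F \<Longrightarrow> x \<in> F \<Longrightarrow> x ^ n \<in> F"
  by (induction n) (auto simp: subfield_1 subfield_mult)

locale nonarch =
  fixes nv :: "'c::field \<Rightarrow> real"
  assumes nonarch_abs: "nonarch_abs nv"
begin

lemma nv_0 [simp]: "nv 0 = 0"
  and nv_pos: "x \<noteq> 0 \<Longrightarrow> 0 < nv x"
  and nv_mult: "nv (x * y) = nv x * nv y"
  and nv_add_le_max: "nv (x + y) \<le> max (nv x) (nv y)"
  using nonarch_abs by (simp_all add: nonarch_abs_def)

lemma nv_nonneg [simp]: "0 \<le> nv x"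
  using nv_pos[of x] by (cases "x = 0") auto

lemma nv_eq_0_iff [simp]: "nv x = 0 \<longleftrightarrow> x = 0"
  using nv_pos[of x] by (cases "x = 0") auto

lemma nv_1 [simp]: "nv 1 = 1"
  using nv_mult[of 1 1] nv_pos[of 1] by simp

lemma nv_minus [simp]: "nv (- x) = nv x"
proof -
  have "nv (- 1) * nv (- 1) = 1"
    using nv_mult[of "- 1" "- 1"] by simp
  then have "(nv (- 1))\<^sup>2 = 1\<^sup>2"
    by (simp add: power2_eq_square)
  then have "nv (- 1) = 1"
    using power2_eq_iff_nonneg[of "nv (- 1)" 1] by simp
  then show ?thesis
    using nv_mult[of "- 1" x] by simp
qed

lemma nv_minus_commute: "nv (x - y) = nv (y - x)"
  by (metis minus_diff_eq nv_minus)

lemma nv_diff_le_max: "nv (x - y) \<le> max (nv x) (nv y)"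
  using nv_add_le_max[of x "- y"] by simp

lemma nv_diff_triangle: "nv (x - z) \<le> nv (x - y) + nv (y - z)"
proof -
  have "nv (x - z) \<le> max (nv (x - y)) (nv (y - z))"
    using nv_add_le_max[of "x - y" "y - z"] by simp
  then show ?thesis
    by (smt (verit) nv_nonneg)
qed

lemma nv_abs_diff_le: "\<bar>nv x - nv y\<bar> \<le> nv (x - y)"
proof -
  have "nv x \<le> max (nv (x - y)) (nv y)" "nv y \<le> max (nv (x - y)) (nv x)"
    using nv_add_le_max[of "x - y" y] nv_add_le_max[of "y - x" x] nv_minus_commute[of x y] by simp_all
  then show ?thesis
    by (smt (verit) nv_nonneg)
qed

lemma nv_eq_if_close: "nv (x - y) < nv y \<Longrightarrow> nv x = nv y"
  using nv_add_le_max[of "x - y" y] nv_add_le_max[of "y - x" x] nv_minus_commute[of x y] by auto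

lemma nv_inverse: "nv (inverse x) = inverse (nv x)"
proof (cases "x = 0")
  case False
  then have "nv x * nv (inverse x) = 1"
    using nv_mult[of x "inverse x"] by simp
  then show ?thesis
    by (simp add: inverse_unique)
qed simp

lemma nv_divide: "nv (x / y) = nv x / nv y"
  by (simp add: divide_inverse nv_mult nv_inverse)

lemma nv_power: "nv (x ^ n) = nv x ^ n"
  by (induction n) (auto simp: nv_mult)

lemma nv_metric: "Metric_space UNIV (\<lambda>x y. nv (x - y))"
  by unfold_locales (auto simp: nv_minus_commute nv_diff_triangle)

definition vlim :: "(nat \<Rightarrow> 'c) \<Rightarrow> 'c \<Rightarrow> bool" where
  "vlim X L \<longleftrightarrow> (\<forall>e>0. eventually (\<lambda>n. nv (X n - L) < e) sequentially)"

lemma vlim_const: "vlim (\<lambda>n. c) c"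
  by (simp add: vlim_def)

lemma vlim_add:
  assumes "vlim X L" "vlim Y K"
  shows "vlim (\<lambda>n. X n + Y n) (L + K)"
  unfolding vlim_def
proof (intro allI impI)
  fix e :: real
  assume "e > 0"
  with assms have "eventually (\<lambda>n. nv (X n - L) < e \<and> nv (Y n - K) < e) sequentially"
    unfolding vlim_def by (intro eventually_conj) auto
  then show "eventually (\<lambda>n. nv (X n + Y n - (L + K)) < e) sequentially"
  proof (rule eventually_mono)
    fix n
    assume n: "nv (X n - L) < e \<and> nv (Y n - K) < e"
    have "nv (X n + Y n - (L + K)) = nv ((X n - L) + (Y n - K))"
      by (simp add: algebra_simps)
    also have "\<dots> \<le> max (nv (X n - L)) (nv (Y n - K))"
      by (rule nv_add_le_max)
    also have "\<dots> < e"
      using n by simp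
    finally show "nv (X n + Y n - (L + K)) < e" .
  qed
qed

lemma vlim_uminus: "vlim X L \<Longrightarrow> vlim (\<lambda>n. - X n) (- L)"
  unfolding vlim_def by (simp add: nv_minus_commute)

lemma vlim_diff: "vlim X L \<Longrightarrow> vlim Y K \<Longrightarrow> vlim (\<lambda>n. X n - Y n) (L - K)"
  using vlim_add[of X L "\<lambda>n. - Y n" "- K"] vlim_uminus[of Y K] by simp

lemma vlim_mult:
  assumes X: "vlim X L" and Y: "vlim Y K"
  shows "vlim (\<lambda>n. X n * Y n) (L * K)"
  unfolding vlim_def
proof (intro allI impI)
  fix e :: real
  assume "e > 0"
  define B where "B = max 1 (nv K)"
  define C where "C = nv L + 1"
  have "B > 0" "C > 0"
    unfolding B_def C_def using nv_nonneg[of L] by linarith+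
  with X Y \<open>e > 0\<close> have "eventually (\<lambda>n. nv (Y n - K) < 1 \<and> nv (X n - L) < e / B
      \<and> nv (Y n - K) < e / C) sequentially"
    unfolding vlim_def by (intro eventually_conj) auto
  then show "eventually (\<lambda>n. nv (X n * Y n - L * K) < e) sequentially"
  proof (rule eventually_mono)
    fix n
    assume n: "nv (Y n - K) < 1 \<and> nv (X n - L) < e / B \<and> nv (Y n - K) < e / C"
    have "nv (Y n) \<le> B"
      using nv_add_le_max[of "Y n - K" K] n unfolding B_def by auto
    then have "nv (X n - L) * nv (Y n) \<le> nv (X n - L) * B"
      by (rule mult_left_mono) simp
    also have "\<dots> < e"
      using n \<open>B > 0\<close> by (simp add: pos_less_divide_eq)
    finally have first: "nv ((X n - L) * Y n) < e"
      by (simp add: nv_mult)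
    have "nv L * nv (Y n - K) \<le> C * nv (Y n - K)"
      unfolding C_def by (rule mult_right_mono) auto
    also have "\<dots> < e"
      using n \<open>C > 0\<close> by (simp add: pos_less_divide_eq mult.commute)
    finally have second: "nv (L * (Y n - K)) < e"
      by (simp add: nv_mult)
    have "X n * Y n - L * K = (X n - L) * Y n + L * (Y n - K)"
      by (simp add: algebra_simps)
    then show "nv (X n * Y n - L * K) < e"
      using nv_add_le_max[of "(X n - L) * Y n" "L * (Y n - K)"] first second by auto
  qed
qed

lemma vlim_eventually_nv:
  assumes "vlim X L" "L \<noteq> 0"
  shows "eventually (\<lambda>n. nv (X n) = nv L) sequentially"
proof -
  have "eventually (\<lambda>n. nv (X n - L) < nv L) sequentially"
    using assms nv_pos[of L] unfolding vlim_def by blast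
  then show ?thesis
    by (rule eventually_mono) (rule nv_eq_if_close)
qed

lemma vlim_inverse:
  assumes X: "vlim X L" and "L \<noteq> 0"
  shows "vlim (\<lambda>n. inverse (X n)) (inverse L)"
  unfolding vlim_def
proof (intro allI impI)
  fix e :: real
  assume "e > 0"
  have L: "nv L * nv L > 0"
    using nv_pos[OF \<open>L \<noteq> 0\<close>] by simp
  have "eventually (\<lambda>n. nv (X n) = nv L \<and> nv (X n - L) < e * (nv L * nv L)) sequentially"
    using vlim_eventually_nv[OF assms] X \<open>e > 0\<close> L unfolding vlim_def
    by (intro eventually_conj) auto
  then show "eventually (\<lambda>n. nv (inverse (X n) - inverse L) < e) sequentially"
  proof (rule eventually_mono)
    fix n
    assume n: "nv (X n) = nv L \<and> nv (X n - L) < e * (nv L * nv L)"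
    then have "X n \<noteq> 0"
      using \<open>L \<noteq> 0\<close> by auto
    then have "inverse (X n) - inverse L = (L - X n) / (X n * L)"
      using \<open>L \<noteq> 0\<close> by (simp add: field_simps)
    then have "nv (inverse (X n) - inverse L) = nv (X n - L) / (nv L * nv L)"
      using n by (simp add: nv_divide nv_mult nv_minus_commute)
    then show "nv (inverse (X n) - inverse L) < e"
      using n L by (simp add: pos_divide_less_eq)
  qed
qed

lemma vlim_divide: "vlim X L \<Longrightarrow> vlim Y K \<Longrightarrow> K \<noteq> 0 \<Longrightarrow> vlim (\<lambda>n. X n / Y n) (L / K)"
  using vlim_mult[of X L "\<lambda>n. inverse (Y n)" "inverse K"] vlim_inverse[of Y K]
  by (simp add: divide_inverse)

lemma vlim_subseq:
  assumes "vlim X L" "strict_mono r"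
  shows "vlim (\<lambda>n. X (r n)) L"
  unfolding vlim_def
proof (intro allI impI)
  fix e :: real
  assume "e > 0"
  then show "eventually (\<lambda>n. nv (X (r n) - L) < e) sequentially"
    using assms(1) eventually_subseq[OF assms(2), of "\<lambda>n. nv (X n - L) < e"] unfolding vlim_def by simp
qed

lemma vlim_nv_const:
  assumes "vlim X L" "\<And>n. nv (X n) = c"
  shows "nv L = c"
proof (rule ccontr)
  assume "nv L \<noteq> c"
  then have "eventually (\<lambda>n. nv (X n - L) < \<bar>nv L - c\<bar>) sequentially"
    using assms(1) unfolding vlim_def by simp
  then obtain n where "nv (X n - L) < \<bar>nv L - c\<bar>"
    using eventually_happens'[OF sequentially_bot] by blast
  then show False
    using nv_abs_diff_le[of "X n" L] assms(2)[of n] by linarith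
qed

lemma vlim_if_Cauchy:
  assumes "v_complete nv" "\<forall>e>0. \<exists>N. \<forall>m\<ge>N. \<forall>n\<ge>N. nv (X m - X n) < e"
  shows "\<exists>L. vlim X L"
  using assms unfolding v_complete_def vlim_def eventually_sequentially by blast

lemma integers_0: "subfield F \<Longrightarrow> 0 \<in> integers nv F"
  and integers_1: "subfield F \<Longrightarrow> 1 \<in> integers nv F"
  by (simp_all add: integers_def subfield_0 subfield_1)

lemma integers_mult: "subfield F \<Longrightarrow> x \<in> integers nv F \<Longrightarrow> y \<in> integers nv F \<Longrightarrow> x * y \<in> integers nv F"
  unfolding integers_def by (auto simp: subfield_mult nv_mult mult_le_one)

lemma integers_add: "subfield F \<Longrightarrow> x \<in> integers nv F \<Longrightarrow> y \<in> integers nv F \<Longrightarrow> x + y \<in> integers nv F"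
  unfolding integers_def using nv_add_le_max[of x y] by (auto simp: subfield_add)

lemma integers_diff: "subfield F \<Longrightarrow> x \<in> integers nv F \<Longrightarrow> y \<in> integers nv F \<Longrightarrow> x - y \<in> integers nv F"
  unfolding integers_def using nv_diff_le_max[of x y] by (auto simp: subfield_diff)

lemma vlim_in_integers:
  assumes "v_closed nv F" "vlim X L" "\<And>n. X n \<in> integers nv F"
  shows "L \<in> integers nv F"
proof -
  have "L \<in> v_closure nv F"
    unfolding v_closure_def
  proof (intro CollectI allI impI)
    fix e :: real
    assume "e > 0"
    then obtain n where "nv (X n - L) < e"
      using assms(2) eventually_happens'[OF sequentially_bot] unfolding vlim_def by blast
    then show "\<exists>a\<in>F. nv (L - a) < e"
      using assms(3)[of n] by (auto simp: integers_def nv_minus_commute)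
  qed
  moreover obtain n where "nv (X n - L) < 1"
    using assms(2) eventually_happens'[OF sequentially_bot] unfolding vlim_def
    by (meson zero_less_one)
  then have "nv L \<le> 1"
    using nv_add_le_max[of "L - X n" "X n"] assms(3)[of n]
    by (auto simp: integers_def nv_minus_commute)
  ultimately show ?thesis
    using assms(1) unfolding v_closed_def integers_def by auto
qed

end

section \<open>Compactness of the integers and of the projective line\<close>

locale embedded_local_field = nonarch nv for nv :: "'c::field \<Rightarrow> real" +
  fixes F :: "'c set"
  assumes local: "local_subfield nv F"
    and complete: "v_complete nv"
begin

lemma F_subfield: "subfield F"
  using local by (simp add: local_subfield_def)

lemma F_closed: "v_closed nv F"
  using local by (simp add: local_subfield_def)

lemma uniformizer_bound:
  assumes "uniformizer nv F \<pi>" "x \<in> F" "nv x < 1"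
  shows "nv x \<le> nv \<pi>"
proof (cases "x = 0")
  case False
  then obtain n :: int where n: "nv x = nv \<pi> powi n"
    using assms(1,2) unfolding uniformizer_def by blast
  have q: "0 < nv \<pi>" "nv \<pi> < 1"
    using assms(1) unfolding uniformizer_def by auto
  then have "\<pi> \<noteq> 0"
    by auto
  have "\<not> n \<le> 0"
    using power_int_decreasing[of n 0 "nv \<pi>"] q n assms(3) \<open>\<pi> \<noteq> 0\<close> by auto
  then show ?thesis
    using power_int_decreasing[of 1 n "nv \<pi>"] q n by simp
qed simp

lemma exists_notin:
  assumes "\<forall>f::'c poly. 0 < degree f \<longrightarrow> (\<exists>z. poly f z = 0)"
  shows "\<exists>w. w \<notin> F"
proof (rule ccontr)
  assume "\<not> (\<exists>w. w \<notin> F)"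
  obtain \<pi> where \<pi>: "uniformizer nv F \<pi>"
    using local unfolding local_subfield_def by blast
  have q: "0 < nv \<pi>" "nv \<pi> < 1"
    using \<pi> unfolding uniformizer_def by auto
  have "0 < degree [:- \<pi>, 0, 1:]"
    by simp
  then obtain w where "poly [:- \<pi>, 0, 1:] w = 0"
    using assms by blast
  then have "w * w = \<pi>"
    by (simp add: algebra_simps)
  then have w: "nv w * nv w = nv \<pi>"
    using nv_mult[of w w] by simp
  have "nv w < 1"
  proof (rule ccontr)
    assume "\<not> nv w < 1"
    then have "1 * 1 \<le> nv w * nv w"
      by (intro mult_mono) auto
    then show False
      using w q by simp
  qed
  then have "nv w \<le> nv \<pi>"
    using uniformizer_bound[OF \<pi>] \<open>\<not> (\<exists>w. w \<notin> F)\<close> by blast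
  then have "nv w * nv w \<le> nv \<pi> * nv \<pi>"
    by (intro mult_mono) auto
  then have "nv \<pi> \<le> nv \<pi> * nv \<pi>"
    using w by simp
  then show False
    using q mult_strict_left_mono[of "nv \<pi>" 1 "nv \<pi>"] by simp
qed

text \<open>This is where finiteness of the residue field enters.\<close>

lemma integers_finite_net:
  assumes \<pi>: "uniformizer nv F \<pi>"
  shows "\<exists>K. finite K \<and> K \<subseteq> integers nv F \<and> (\<forall>x\<in>integers nv F. \<exists>r\<in>K. nv (x - r) \<le> nv \<pi> ^ k)"
proof (induction k)
  case 0
  then show ?case
    by (intro exI[of _ "{0}"]) (auto simp: integers_def subfield_0[OF F_subfield])
next
  case (Suc k)
  let ?O = "integers nv F"
  obtain K where K: "finite K" "K \<subseteq> ?O" "\<forall>x\<in>?O. \<exists>r\<in>K. nv (x - r) \<le> nv \<pi> ^ k"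
    using Suc.IH by blast
  obtain R where R: "finite R" "R \<subseteq> ?O" "\<forall>x\<in>?O. \<exists>r\<in>R. nv (x - r) < 1"
    using local unfolding local_subfield_def by blast
  have q: "0 < nv \<pi>" "nv \<pi> < 1" and "\<pi> \<in> F" "\<pi> \<noteq> 0"
    using \<pi> unfolding uniformizer_def by auto
  have \<pi>k: "\<pi> ^ k \<in> ?O" "nv (\<pi> ^ k) = nv \<pi> ^ k" "nv \<pi> ^ k > 0"
    using subfield_power[OF F_subfield \<open>\<pi> \<in> F\<close>] q by (auto simp: integers_def nv_power power_le_one)
  define K' where "K' = (\<lambda>(r, r'). r + \<pi> ^ k * r') ` (K \<times> R)"
  have "finite K'"
    unfolding K'_def using K(1) R(1) by simp
  moreover have "K' \<subseteq> ?O"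
    using K(2) R(2) \<pi>k(1) unfolding K'_def
    by (auto intro!: integers_add integers_mult F_subfield)
  moreover have "\<exists>r\<in>K'. nv (x - r) \<le> nv \<pi> ^ Suc k" if x: "x \<in> ?O" for x
  proof -
    obtain r where r: "r \<in> K" "nv (x - r) \<le> nv \<pi> ^ k"
      using K(3) x by blast
    define z where "z = (x - r) / \<pi> ^ k"
    have "z \<in> F"
      unfolding z_def using r(1) K(2) x \<pi>k(1) F_subfield
      by (auto simp: integers_def intro!: subfield_divide subfield_diff)
    moreover have "nv z \<le> 1"
      unfolding z_def using r(2) \<pi>k by (simp add: nv_divide divide_le_eq_1)
    ultimately obtain r' where r': "r' \<in> R" "nv (z - r') < 1"
      using R(3) by (auto simp: integers_def)
    then have "nv (z - r') \<le> nv \<pi>"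
      using R(2) \<open>z \<in> F\<close> F_subfield
      by (intro uniformizer_bound[OF \<pi>]) (auto simp: integers_def intro: subfield_diff)
    have "x - (r + \<pi> ^ k * r') = \<pi> ^ k * (z - r')"
      unfolding z_def using \<open>\<pi> \<noteq> 0\<close> by (simp add: field_simps)
    then have "nv (x - (r + \<pi> ^ k * r')) = nv \<pi> ^ k * nv (z - r')"
      using \<pi>k(2) by (simp add: nv_mult)
    also have "\<dots> \<le> nv \<pi> ^ k * nv \<pi>"
      using \<open>nv (z - r') \<le> nv \<pi>\<close> by (rule mult_left_mono) simp
    finally have "nv (x - (r + \<pi> ^ k * r')) \<le> nv \<pi> ^ Suc k"
      by (simp add: mult.commute)
    moreover have "r + \<pi> ^ k * r' \<in> K'"
      unfolding K'_def using r(1) r'(1) by (intro image_eqI[of _ _ "(r, r')"]) auto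
    ultimately show ?thesis
      by blast
  qed
  ultimately show ?case
    by blast
qed

lemma integers_seq_compact:
  fixes X :: "nat \<Rightarrow> 'c"
  assumes "\<And>n. X n \<in> integers nv F"
  shows "\<exists>r L. strict_mono r \<and> L \<in> integers nv F \<and> vlim (\<lambda>n. X (r n)) L"
proof -
  obtain \<pi> where \<pi>: "uniformizer nv F \<pi>"
    using local unfolding local_subfield_def by blast
  then have "nv \<pi> < 1"
    unfolding uniformizer_def by blast
  have "Metric_space.mtotally_bounded UNIV (\<lambda>x y. nv (x - y)) (integers nv F)"
    unfolding Metric_space.mtotally_bounded_def[OF nv_metric] Metric_space.mball_def[OF nv_metric]
  proof (intro allI impI)
    fix e :: real
    assume "e > 0"
    obtain k where k: "nv \<pi> ^ k < e"
      using real_arch_pow_inv[OF \<open>e > 0\<close> \<open>nv \<pi> < 1\<close>] ..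
    obtain K where K: "finite K" "K \<subseteq> integers nv F"
      "\<forall>x\<in>integers nv F. \<exists>r\<in>K. nv (x - r) \<le> nv \<pi> ^ k"
      using integers_finite_net[OF \<pi>, of k] by (elim exE conjE)
    have "integers nv F \<subseteq> (\<Union>r\<in>K. {x. r \<in> UNIV \<and> x \<in> UNIV \<and> nv (r - x) < e})"
    proof
      fix x
      assume "x \<in> integers nv F"
      then obtain r where "r \<in> K" "nv (x - r) \<le> nv \<pi> ^ k"
        using K(3) by blast
      moreover from this have "nv (r - x) < e"
        using k nv_minus_commute[of x r] by linarith
      ultimately show "x \<in> (\<Union>r\<in>K. {x. r \<in> UNIV \<and> x \<in> UNIV \<and> nv (r - x) < e})"
        by blast
    qed
    with K(1,2) show "\<exists>K. finite K \<and> K \<subseteq> integers nv F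
        \<and> integers nv F \<subseteq> (\<Union>r\<in>K. {x. r \<in> UNIV \<and> x \<in> UNIV \<and> nv (r - x) < e})"
      by (intro exI[of _ K]) simp
  qed
  moreover have "range X \<subseteq> integers nv F"
    using assms by blast
  ultimately obtain r where r: "strict_mono r" "Metric_space.MCauchy UNIV (\<lambda>x y. nv (x - y)) (X \<circ> r)"
    using iffD1[OF Metric_space.mtotally_bounded_sequentially[OF nv_metric]] by blast
  then have "\<forall>e>0. \<exists>N. \<forall>m\<ge>N. \<forall>n\<ge>N. nv (X (r m) - X (r n)) < e"
    unfolding Metric_space.MCauchy_def[OF nv_metric] by simp
  then obtain L where L: "vlim (\<lambda>n. X (r n)) L"
    using vlim_if_Cauchy[OF complete, of "\<lambda>n. X (r n)"] by blast
  moreover have "L \<in> integers nv F"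
    using F_closed L assms by (rule vlim_in_integers)
  ultimately show ?thesis
    using r(1) by blast
qed

end

lemma strict_mono_subseq_const:
  fixes f :: "nat \<Rightarrow> 'a"
  assumes "finite (range f)"
  shows "\<exists>r :: nat \<Rightarrow> nat. \<exists>c. strict_mono r \<and> (\<forall>n. f (r n) = c)"
proof -
  obtain n0 where "infinite {n. f n = f n0}"
    using pigeonhole_infinite[OF infinite_UNIV_nat assms] by auto
  then obtain r :: "nat \<Rightarrow> nat" where "strict_mono r" "\<forall>n. r n \<in> {n. f n = f n0}"
    using infinite_enumerate by blast
  then show ?thesis
    by (intro exI[of _ r] exI[of _ "f n0"]) simp
qed

lemma strict_mono_subseq_finite_family:
  fixes P :: "'i \<Rightarrow> (nat \<Rightarrow> nat) \<Rightarrow> bool"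
  assumes "finite I"
    and achieve: "\<And>i r. i \<in> I \<Longrightarrow> strict_mono r \<Longrightarrow> \<exists>r'. strict_mono (r' :: nat \<Rightarrow> nat) \<and> P i (r \<circ> r')"
    and keep: "\<And>i r r'. i \<in> I \<Longrightarrow> P i r \<Longrightarrow> strict_mono (r' :: nat \<Rightarrow> nat) \<Longrightarrow> P i (r \<circ> r')"
  shows "\<exists>r. strict_mono r \<and> (\<forall>i\<in>I. P i r)"
proof -
  have "\<exists>r. strict_mono r \<and> (\<forall>i\<in>J. P i r)" if "finite J" "J \<subseteq> I" for J
    using that
  proof (induction J rule: finite_induct)
    case empty
    show ?case
      using strict_mono_id by auto
  next
    case (insert i J)
    then obtain r where r: "strict_mono r" "\<forall>j\<in>J. P j r"
      by blast
    obtain r' where r': "strict_mono r'" "P i (r \<circ> r')"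
      using achieve[of i r] insert.prems r(1) by blast
    have "P j (r \<circ> r')" if "j \<in> J" for j
      using keep[of j r r'] that r(2) insert.prems r'(1) by blast
    then show ?case
      using r'(2) strict_mono_o[OF r(1) r'(1)] by blast
  qed
  then show ?thesis
    using assms(1) by blast
qed

lemma p1_tendsto_Some_iff:
  "p1_tendsto nv X (Some a) \<longleftrightarrow> (\<forall>e>0. eventually (\<lambda>n. \<exists>z. X n = Some z \<and> nv (z - a) < e) sequentially)"
  by (simp add: p1_tendsto_def eventually_sequentially)

lemma p1_tendsto_None_iff:
  "p1_tendsto nv X None \<longleftrightarrow> (\<forall>R. eventually (\<lambda>n. X n = None \<or> (\<exists>z. X n = Some z \<and> R < nv z)) sequentially)"
  by (simp add: p1_tendsto_def eventually_sequentially)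

lemma p1_tendsto_subseq:
  assumes "p1_tendsto nv X l" "strict_mono r"
  shows "p1_tendsto nv (\<lambda>n. X (r n)) l"
proof (cases l)
  case None
  show ?thesis
    unfolding None p1_tendsto_None_iff
  proof
    fix R
    show "eventually (\<lambda>n. X (r n) = None \<or> (\<exists>z. X (r n) = Some z \<and> R < nv z)) sequentially"
      using assms(1) eventually_subseq[OF assms(2), of "\<lambda>n. X n = None \<or> (\<exists>z. X n = Some z \<and> R < nv z)"]
      unfolding None p1_tendsto_None_iff by simp
  qed
next
  case (Some a)
  show ?thesis
    unfolding Some p1_tendsto_Some_iff
  proof (intro allI impI)
    fix e :: real
    assume "e > 0"
    then show "eventually (\<lambda>n. \<exists>z. X (r n) = Some z \<and> nv (z - a) < e) sequentially"
      using assms(1) eventually_subseq[OF assms(2), of "\<lambda>n. \<exists>z. X n = Some z \<and> nv (z - a) < e"]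
      unfolding Some p1_tendsto_Some_iff by simp
  qed
qed

lemma p1_tendsto_subseq_finite_family:
  fixes Z :: "'s \<Rightarrow> nat \<Rightarrow> 'c::field option"
  assumes "finite S"
    and "\<And>s r. s \<in> S \<Longrightarrow> strict_mono r \<Longrightarrow>
      \<exists>r' l. strict_mono (r' :: nat \<Rightarrow> nat) \<and> l \<notin> L s \<and> p1_tendsto nv (\<lambda>j. Z s (r (r' j))) l"
  shows "\<exists>r x. strict_mono r \<and> (\<forall>s\<in>S. x s \<notin> L s \<and> p1_tendsto nv (\<lambda>j. Z s (r j)) (x s))"
proof -
  have "\<exists>r. strict_mono r \<and> (\<forall>s\<in>S. \<exists>l. l \<notin> L s \<and> p1_tendsto nv (\<lambda>j. Z s (r j)) l)"
  proof (rule strict_mono_subseq_finite_family[OF assms(1)])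
    fix s and r :: "nat \<Rightarrow> nat"
    assume "s \<in> S" "strict_mono r"
    then show "\<exists>r'. strict_mono r' \<and> (\<exists>l. l \<notin> L s \<and> p1_tendsto nv (\<lambda>j. Z s ((r \<circ> r') j)) l)"
      using assms(2) unfolding comp_def by blast
  next
    fix s and r r' :: "nat \<Rightarrow> nat"
    assume "\<exists>l. l \<notin> L s \<and> p1_tendsto nv (\<lambda>j. Z s (r j)) l" "strict_mono r'"
    then show "\<exists>l. l \<notin> L s \<and> p1_tendsto nv (\<lambda>j. Z s ((r \<circ> r') j)) l"
      using p1_tendsto_subseq[where X = "\<lambda>j. Z s (r j)"] unfolding comp_def by blast
  qed
  then obtain r where r: "strict_mono r" "\<forall>s\<in>S. \<exists>l. l \<notin> L s \<and> p1_tendsto nv (\<lambda>j. Z s (r j)) l"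
    by blast
  from bchoice[OF r(2)] obtain x where "\<forall>s\<in>S. x s \<notin> L s \<and> p1_tendsto nv (\<lambda>j. Z s (r j)) (x s)"
    by blast
  then show ?thesis
    using r(1) by blast
qed

context nonarch
begin

lemma p1_tendsto_SomeI:
  assumes "eventually (\<lambda>n. X n = Some (Y n)) sequentially" "vlim Y a"
  shows "p1_tendsto nv X (Some a)"
  unfolding p1_tendsto_Some_iff
proof (intro allI impI)
  fix e :: real
  assume "e > 0"
  then have "eventually (\<lambda>n. X n = Some (Y n) \<and> nv (Y n - a) < e) sequentially"
    using assms unfolding vlim_def by (intro eventually_conj) auto
  then show "eventually (\<lambda>n. \<exists>z. X n = Some z \<and> nv (z - a) < e) sequentially"
    by (rule eventually_mono) auto
qed

lemma p1_tendsto_inverse_chart: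
  assumes "vlim b L" and z: "\<And>n. z n = (if b n = 0 then None else Some (inverse (b n)))"
  shows "p1_tendsto nv z (if L = 0 then None else Some (inverse L))"
proof (cases "L = 0")
  case False
  have "eventually (\<lambda>n. z n = Some (inverse (b n))) sequentially"
    using vlim_eventually_nv[OF assms(1) False] by (rule eventually_mono) (use False z in auto)
  then show ?thesis
    using p1_tendsto_SomeI vlim_inverse[OF assms(1) False] False by simp
next
  case True
  have "eventually (\<lambda>n. z n = None \<or> (\<exists>w. z n = Some w \<and> R < nv w)) sequentially" for R
  proof -
    define R' where "R' = max R 1"
    have "R' > 0" "R \<le> R'"
      unfolding R'_def by auto
    then have "eventually (\<lambda>n. nv (b n) < inverse R') sequentially"
      using assms(1) True unfolding vlim_def by simp
    then show ?thesis
    proof (rule eventually_mono)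
      fix n
      assume "nv (b n) < inverse R'"
      then have "b n \<noteq> 0 \<Longrightarrow> R' < nv (inverse (b n))"
        using \<open>R' > 0\<close> by (metis inverse_inverse_eq less_imp_inverse_less nv_inverse nv_pos)
      then show "z n = None \<or> (\<exists>w. z n = Some w \<and> R < nv w)"
        using z[of n] \<open>R \<le> R'\<close> by auto
    qed
  qed
  then show ?thesis
    using True by (simp add: p1_tendsto_None_iff)
qed

end

context embedded_local_field
begin

lemma integers_seq_compact_finite:
  fixes E :: "(nat \<Rightarrow> 'c) set"
  assumes "finite E" "\<And>X n. X \<in> E \<Longrightarrow> X n \<in> integers nv F"
  shows "\<exists>r. strict_mono r \<and> (\<forall>X\<in>E. \<exists>L\<in>integers nv F. vlim (\<lambda>n. X (r n)) L)"
proof (rule strict_mono_subseq_finite_family[OF assms(1)])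
  fix X :: "nat \<Rightarrow> 'c" and r :: "nat \<Rightarrow> nat"
  assume "X \<in> E"
  then obtain r' L where "strict_mono r'" "L \<in> integers nv F" "vlim (\<lambda>n. X (r (r' n))) L"
    using integers_seq_compact[of "\<lambda>n. X (r n)"] assms(2) by blast
  then show "\<exists>r'. strict_mono r' \<and> (\<exists>L\<in>integers nv F. vlim (\<lambda>n. X ((r \<circ> r') n)) L)"
    unfolding comp_def by blast
next
  fix X :: "nat \<Rightarrow> 'c" and r r' :: "nat \<Rightarrow> nat"
  assume "\<exists>L\<in>integers nv F. vlim (\<lambda>n. X (r n)) L" "strict_mono r'"
  then show "\<exists>L\<in>integers nv F. vlim (\<lambda>n. X ((r \<circ> r') n)) L"
    using vlim_subseq[where X = "\<lambda>n. X (r n)"] unfolding comp_def by blast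
qed

lemma P1_seq_compact_outside_integers:
  fixes z :: "nat \<Rightarrow> 'c option"
  assumes z: "\<And>n. z n \<in> P1 F" and far: "\<And>n. z n \<notin> Some ` integers nv F"
  shows "\<exists>r l. strict_mono r \<and> p1_tendsto nv (\<lambda>n. z (r n)) l"
proof -
  define b where "b n = (case z n of None \<Rightarrow> 0 | Some x \<Rightarrow> inverse x)" for n
  have big: "1 < nv x" if "z n = Some x" for n x
  proof -
    have "x \<in> F"
      using z[of n] that by (auto simp: P1_def)
    moreover have "x \<notin> integers nv F"
      using far[of n] that by auto
    ultimately show ?thesis
      by (simp add: integers_def)
  qed
  have b: "b n \<in> integers nv F" for n
    using big[of n] z[of n] F_subfield
    by (cases "z n") (auto simp: b_def integers_def P1_def nv_inverse subfield_0
        inverse_le_1_iff intro: subfield_inverse)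
  have chart: "z n = (if b n = 0 then None else Some (inverse (b n)))" for n
    using big[of n] by (cases "z n") (auto simp: b_def)
  obtain r L where r: "strict_mono r" "vlim (\<lambda>n. b (r n)) L"
    using integers_seq_compact[of b] b by blast
  have "p1_tendsto nv (\<lambda>n. z (r n)) (if L = 0 then None else Some (inverse L))"
    by (rule p1_tendsto_inverse_chart[OF r(2)]) (rule chart)
  then show ?thesis
    using r(1) by blast
qed

lemma P1_seq_compact:
  fixes z :: "nat \<Rightarrow> 'c option"
  assumes z: "\<And>n. z n \<in> P1 F"
  shows "\<exists>r l. strict_mono r \<and> p1_tendsto nv (\<lambda>n. z (r n)) l"
proof -
  let ?A = "Some ` integers nv F"
  have fin: "finite (range (\<lambda>n. z n \<in> ?A))"
    by (rule finite_subset[OF subset_UNIV]) simp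
  obtain r :: "nat \<Rightarrow> nat" and c where r: "strict_mono r" "\<forall>n. (z (r n) \<in> ?A) = c"
    using strict_mono_subseq_const[OF fin] by blast
  show ?thesis
  proof (cases c)
    case True
    define a where "a n = the (z (r n))" for n
    have a: "z (r n) = Some (a n)" "a n \<in> integers nv F" for n
      using r(2)[rule_format, of n] True unfolding a_def by auto
    obtain r' L where r': "strict_mono r'" "vlim (\<lambda>n. a (r' n)) L"
      using integers_seq_compact[of a] a(2) by blast
    have "p1_tendsto nv (\<lambda>n. z (r (r' n))) (Some L)"
      using p1_tendsto_SomeI[of "\<lambda>n. z (r (r' n))" "\<lambda>n. a (r' n)" L] a(1) r'(2) by simp
    then show ?thesis
      using strict_mono_compose[OF r(1) r'(1)] by blast
  next
    case False
    have "z (r n) \<in> P1 F" "z (r n) \<notin> ?A" for n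
      using z r(2) False by auto
    then obtain r' l where "strict_mono r'" "p1_tendsto nv (\<lambda>n. z (r (r' n))) l"
      using P1_seq_compact_outside_integers[of "\<lambda>n. z (r n)"] by blast
    then show ?thesis
      using strict_mono_compose[OF r(1)] by blast
  qed
qed

end

section \<open>Matrices and Moebius transformations\<close>

definition basis_mat :: "'c \<times> 'c \<Rightarrow> 'c \<times> 'c \<Rightarrow> 'c::field mat2" where
  "basis_mat u w = (fst u, fst w, snd u, snd w)"

lemma mapply_mmul: "mapply (mmul A B) x = mapply A (mapply B x)"
  by (cases A; cases B; cases x) (simp add: algebra_simps)

lemma mmul_assoc: "mmul (mmul A B) C = mmul A (mmul B C)"
  by (cases A; cases B; cases C) (simp add: algebra_simps)

lemma mdet_mmul: "mdet (mmul A B) = mdet A * mdet B"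
  by (cases A; cases B) (simp add: algebra_simps)

lemma mdet_madj: "mdet (madj A) = mdet A"
  by (cases A) (simp add: algebra_simps)

lemma mmul_basis_mat: "mmul A (basis_mat u w) = basis_mat (mapply A u) (mapply A w)"
  by (cases A; cases u; cases w) (simp add: basis_mat_def)

lemma basis_mat_columns: "basis_mat (mapply U (1, 0)) (mapply U (0, 1)) = U"
  by (cases U) (simp add: basis_mat_def)

lemma mapply_basis_mat: "mapply (basis_mat u w) (a, c) = vadd (vscale a u) (vscale c w)"
  by (cases u; cases w) (simp add: basis_mat_def vadd_def vscale_def algebra_simps)

lemma msmul_mdet_eq_mmul_madj: "msmul (mdet U) M = mmul (mmul M U) (madj U)"
  by (cases M; cases U) (simp add: algebra_simps)

lemma mapply_msmul: "mapply (msmul l M) x = vscale l (mapply M x)"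
  by (cases M; cases x) (simp add: vscale_def algebra_simps)

lemma mob_msmul:
  assumes "l \<noteq> 0"
  shows "mob (msmul l M) x = mob M x"
proof (cases M)
  case (fields a b c d)
  have "l * c * z + l * d = l * (c * z + d)" "l * a * z + l * b = l * (a * z + b)" for z
    by (simp_all add: algebra_simps)
  then show ?thesis
    using assms by (cases x) (simp_all add: fields)
qed

lemma gl2_mmul: "subfield F \<Longrightarrow> gl2 F A \<Longrightarrow> gl2 F B \<Longrightarrow> gl2 F (mmul A B)"
  using mdet_mmul[of A B] by (cases A; cases B) (auto simp: gl2_def intro!: subfield_add subfield_mult)

lemma gl2_madj: "subfield F \<Longrightarrow> gl2 F A \<Longrightarrow> gl2 F (madj A)"
  using mdet_madj[of A] by (cases A) (auto simp: gl2_def mult.commute intro!: subfield_uminus)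

lemma mob_P1:
  assumes F: "subfield F" and "gl2 F N" "x \<in> P1 F"
  shows "mob N x \<in> P1 F"
proof -
  obtain a b c d where N: "N = (a, b, c, d)" and "a \<in> F" "b \<in> F" "c \<in> F" "d \<in> F"
    using assms(2) unfolding gl2_def by (cases N) auto
  then show ?thesis
    using assms(3) by (cases x) (auto simp: P1_def intro!: subfield_divide subfield_add subfield_mult F)
qed

lemma mob_Some_notin:
  assumes F: "subfield F" and "gl2 F N" and w: "w \<notin> F"
  shows "\<exists>t. mob N (Some w) = Some t \<and> t \<notin> F"
proof -
  obtain a b c d where N: "N = (a, b, c, d)" and abcd: "a \<in> F" "b \<in> F" "c \<in> F" "d \<in> F"
    and det: "a * d - b * c \<noteq> 0"
    using assms(2) unfolding gl2_def by (cases N) auto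
  have den: "c * w + d \<noteq> 0"
  proof
    assume zero: "c * w + d = 0"
    show False
    proof (cases "c = 0")
      case True
      then show False
        using zero det by simp
    next
      case False
      then have "w = - d / c"
        using zero by (simp add: field_simps eq_neg_iff_add_eq_0)
      moreover have "- d / c \<in> F"
        using abcd F by (intro subfield_divide subfield_uminus)
      ultimately show False
        using w by simp
    qed
  qed
  define t where "t = (a * w + b) / (c * w + d)"
  have "t \<notin> F"
  proof
    assume t: "t \<in> F"
    have eq: "(a - t * c) * w = t * d - b"
      using den unfolding t_def by (simp add: field_simps)
    show False
    proof (cases "a - t * c = 0")
      case True
      then have "a * d - b * c = 0"
        using eq by (simp add: algebra_simps)
      then show False
        using det by simp
    next
      case False
      then have "w = (t * d - b) / (a - t * c)"
        using eq by (simp add: field_simps)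
      then show False
        using w t abcd by (auto intro!: subfield_divide subfield_diff subfield_mult F)
    qed
  qed
  then show ?thesis
    using den unfolding N t_def by simp
qed

lemma pgl_class_self:
  assumes "subfield F"
  shows "N \<in> pgl_class F N"
proof -
  have "N = msmul 1 N"
    by (cases N) simp
  then show ?thesis
    unfolding pgl_class_def using subfield_1[OF assms] by (intro CollectI exI[of _ 1]) simp
qed

lemma pmob_mem:
  assumes "g \<in> pgl2 F" "M \<in> g"
  shows "pmob g x = mob M x"
proof -
  obtain N where g: "g = pgl_class F N"
    using assms(1) unfolding pgl2_def by blast
  have "mob M' x = mob N x" if "M' \<in> g" for M'
    using that unfolding g pgl_class_def by (auto simp: mob_msmul)
  then show ?thesis
    unfolding pmob_def using assms(2) by (metis someI)
qed

lemma pmob_P1: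
  assumes "subfield F" "g \<in> pgl2 F" "x \<in> P1 F"
  shows "pmob g x \<in> P1 F"
proof -
  obtain N where N: "g = pgl_class F N" "gl2 F N"
    using assms(2) unfolding pgl2_def by blast
  then have "N \<in> g"
    using pgl_class_self[OF assms(1)] by simp
  then have "pmob g x = mob N x"
    by (rule pmob_mem[OF assms(2)])
  then show ?thesis
    using mob_P1[OF assms(1) N(2) assms(3)] by simp
qed

context nonarch
begin

definition mlim :: "(nat \<Rightarrow> 'c mat2) \<Rightarrow> 'c mat2 \<Rightarrow> bool" where
  "mlim Ns N \<longleftrightarrow> vlim (\<lambda>n. fst (Ns n)) (fst N) \<and> vlim (\<lambda>n. fst (snd (Ns n))) (fst (snd N))
     \<and> vlim (\<lambda>n. fst (snd (snd (Ns n)))) (fst (snd (snd N)))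
     \<and> vlim (\<lambda>n. snd (snd (snd (Ns n)))) (snd (snd (snd N)))"

lemma mlim_const: "mlim (\<lambda>n. N) N"
  by (simp add: mlim_def vlim_const)

lemma mlim_mmul:
  assumes "mlim As A" "mlim Bs B"
  shows "mlim (\<lambda>n. mmul (As n) (Bs n)) (mmul A B)"
proof -
  have mmul_entries: "mmul P Q =
    (fst P * fst Q + fst (snd P) * fst (snd (snd Q)), fst P * fst (snd Q) + fst (snd P) * snd (snd (snd Q)),
     fst (snd (snd P)) * fst Q + snd (snd (snd P)) * fst (snd (snd Q)),
     fst (snd (snd P)) * fst (snd Q) + snd (snd (snd P)) * snd (snd (snd Q)))" for P Q :: "'c mat2"
    by (cases P; cases Q) simp
  show ?thesis
    using assms unfolding mlim_def mmul_entries by (auto intro!: vlim_add vlim_mult)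
qed

lemma mob_tendsto:
  assumes "mlim Ns N" "mob N (Some w) = Some t"
  shows "p1_tendsto nv (\<lambda>n. mob (Ns n) (Some w)) (Some t)"
proof -
  obtain a b c d where N: "N = (a, b, c, d)"
    by (cases N)
  have nz: "c * w + d \<noteq> 0" and t: "t = (a * w + b) / (c * w + d)"
    using assms(2) unfolding N by (auto split: if_splits)
  define num where "num n = fst (Ns n) * w + fst (snd (Ns n))" for n
  define den where "den n = fst (snd (snd (Ns n))) * w + snd (snd (snd (Ns n)))" for n
  have num: "vlim num (a * w + b)" and den: "vlim den (c * w + d)"
    using assms(1) unfolding mlim_def N num_def den_def by (auto intro!: vlim_add vlim_mult vlim_const)
  have "eventually (\<lambda>n. den n \<noteq> 0) sequentially"
    using vlim_eventually_nv[OF den nz] by (rule eventually_mono) (use nz in auto)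
  moreover have "den n \<noteq> 0 \<Longrightarrow> mob (Ns n) (Some w) = Some (num n / den n)" for n
    unfolding num_def den_def by (cases "Ns n") auto
  ultimately have "eventually (\<lambda>n. mob (Ns n) (Some w) = Some (num n / den n)) sequentially"
    by (rule eventually_mono)
  then show ?thesis
    unfolding t by (rule p1_tendsto_SomeI[OF _ vlim_divide[OF num den nz]])
qed

end

section \<open>Lattices\<close>

definition GL2_int :: "('c::field \<Rightarrow> real) \<Rightarrow> 'c set \<Rightarrow> 'c mat2 set" where
  "GL2_int nv F = {(a, b, c, d) | a b c d. a \<in> integers nv F \<and> b \<in> integers nv F
     \<and> c \<in> integers nv F \<and> d \<in> integers nv F \<and> nv (a * d - b * c) = 1}"

lemma (in nonarch) GL2_int_gl2:
  assumes "K \<in> GL2_int nv F"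
  shows "gl2 F K"
proof -
  obtain a b c d where "K = (a, b, c, d)" "{a, b, c, d} \<subseteq> F" "nv (a * d - b * c) = 1"
    using assms unfolding GL2_int_def integers_def by blast
  moreover have "a * d - b * c \<noteq> 0"
    using calculation(3) by (metis nv_0 zero_neq_one)
  ultimately show ?thesis
    by (simp add: gl2_def)
qed

lemma (in embedded_local_field) GL2_int_seq_compact:
  fixes K :: "nat \<Rightarrow> 'c mat2"
  assumes "\<And>n. K n \<in> GL2_int nv F"
  shows "\<exists>r K0. strict_mono r \<and> K0 \<in> GL2_int nv F \<and> mlim (\<lambda>n. K (r n)) K0"
proof -
  let ?O = "integers nv F"
  define E where "E = {\<lambda>n. fst (K n), \<lambda>n. fst (snd (K n)), \<lambda>n. fst (snd (snd (K n))),
    \<lambda>n. snd (snd (snd (K n)))}"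
  have "finite E"
    by (simp add: E_def)
  moreover have "X n \<in> ?O" if "X \<in> E" for X n
    using that assms[of n] unfolding E_def GL2_int_def by auto
  ultimately obtain r where r: "strict_mono r" and conv: "\<forall>X\<in>E. \<exists>L\<in>?O. vlim (\<lambda>n. X (r n)) L"
    using integers_seq_compact_finite[of E] by blast
  then obtain a b c d where abcd: "{a, b, c, d} \<subseteq> ?O"
    and "vlim (\<lambda>n. fst (K (r n))) a" "vlim (\<lambda>n. fst (snd (K (r n)))) b"
      "vlim (\<lambda>n. fst (snd (snd (K (r n))))) c" "vlim (\<lambda>n. snd (snd (snd (K (r n))))) d"
    unfolding E_def by (simp only: ball_simps) blast
  then have lim: "mlim (\<lambda>n. K (r n)) (a, b, c, d)"
    by (simp add: mlim_def)
  then have "vlim (\<lambda>n. fst (K (r n)) * snd (snd (snd (K (r n))))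
      - fst (snd (K (r n))) * fst (snd (snd (K (r n))))) (a * d - b * c)"
    unfolding mlim_def by (auto intro!: vlim_diff vlim_mult)
  moreover have "nv (fst (K n) * snd (snd (snd (K n))) - fst (snd (K n)) * fst (snd (snd (K n)))) = 1" for n
    using assms[of n] unfolding GL2_int_def by auto
  ultimately have "nv (a * d - b * c) = 1"
    by (rule vlim_nv_const)
  then show ?thesis
    using r abcd lim unfolding GL2_int_def by blast
qed

lemma (in nonarch) lattice_subset_imp_integral_factor:
  assumes F: "subfield F"
    and sub: "mapply U ` (integers nv F \<times> integers nv F) \<subseteq> mapply U' ` (integers nv F \<times> integers nv F)"
  shows "\<exists>a b c d. {a, b, c, d} \<subseteq> integers nv F \<and> U = mmul U' (a, b, c, d)"
proof -
  let ?O = "integers nv F"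
  have "(1, 0) \<in> ?O \<times> ?O" "(0, 1) \<in> ?O \<times> ?O"
    using integers_0[OF F] integers_1[OF F] by auto
  then have "mapply U (1, 0) \<in> mapply U' ` (?O \<times> ?O)" "mapply U (0, 1) \<in> mapply U' ` (?O \<times> ?O)"
    using sub by blast+
  then obtain a b c d where "{a, b, c, d} \<subseteq> ?O"
    and "mapply U (1, 0) = mapply U' (a, c)" "mapply U (0, 1) = mapply U' (b, d)"
    by auto
  moreover from this have "U = mmul U' (a, b, c, d)"
    using basis_mat_columns[of U] mmul_basis_mat[of U' "(a, c)" "(b, d)"] by (simp add: basis_mat_def)
  ultimately show ?thesis
    by blast
qed

lemma (in nonarch) lattice_eq_imp_GL2_int:
  assumes F: "subfield F" and det: "mdet U' \<noteq> 0"
    and eq: "mapply U ` (integers nv F \<times> integers nv F) = mapply U' ` (integers nv F \<times> integers nv F)"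
  shows "\<exists>K\<in>GL2_int nv F. U = mmul U' K"
proof -
  let ?O = "integers nv F"
  obtain a b c d where abcd: "{a, b, c, d} \<subseteq> ?O" and U: "U = mmul U' (a, b, c, d)"
    using lattice_subset_imp_integral_factor[OF F equalityD1[OF eq]] by blast
  obtain a' b' c' d' where abcd': "{a', b', c', d'} \<subseteq> ?O" and U': "U' = mmul U (a', b', c', d')"
    using lattice_subset_imp_integral_factor[OF F equalityD2[OF eq]] by blast
  have "U' = mmul (mmul U' (a, b, c, d)) (a', b', c', d')"
    using U' unfolding U .
  then have "U' = mmul U' (mmul (a, b, c, d) (a', b', c', d'))"
    by (simp only: mmul_assoc)
  then have "mdet U' = mdet U' * (mdet (a, b, c, d) * mdet (a', b', c', d'))"
    by (metis mdet_mmul)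
  then have "(a * d - b * c) * (a' * d' - b' * c') = 1"
    using det by simp
  then have prod: "nv (a * d - b * c) * nv (a' * d' - b' * c') = 1"
    by (metis nv_1 nv_mult)
  have "a * d - b * c \<in> ?O" "a' * d' - b' * c' \<in> ?O"
    using abcd abcd' F by (auto intro!: integers_diff integers_mult)
  then have "nv (a * d - b * c) \<le> 1" "nv (a' * d' - b' * c') \<le> 1"
    by (simp_all add: integers_def)
  moreover have "nv (a * d - b * c) * nv (a' * d' - b' * c') \<le> nv (a * d - b * c)"
    using calculation(2) by (rule mult_left_le) simp
  ultimately have "nv (a * d - b * c) = 1"
    using prod by linarith
  then show ?thesis
    using U abcd unfolding GL2_int_def by blast
qed

lemma lat_span_eq_image: "lat_span nv F u w = mapply (basis_mat u w) ` (integers nv F \<times> integers nv F)"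
proof (intro set_eqI iffI)
  fix x
  assume "x \<in> lat_span nv F u w"
  then obtain a c where "a \<in> integers nv F" "c \<in> integers nv F" "x = mapply (basis_mat u w) (a, c)"
    unfolding lat_span_def mapply_basis_mat by blast
  then show "x \<in> mapply (basis_mat u w) ` (integers nv F \<times> integers nv F)"
    by blast
next
  fix x
  assume "x \<in> mapply (basis_mat u w) ` (integers nv F \<times> integers nv F)"
  then obtain a c where "a \<in> integers nv F" "c \<in> integers nv F" "x = mapply (basis_mat u w) (a, c)"
    by blast
  then show "x \<in> lat_span nv F u w"
    unfolding lat_span_def mapply_basis_mat by blast
qed

lemma bt_vertex_imp_gl2_image:
  assumes "bt_vertex nv F v"
  shows "\<exists>U. gl2 F U \<and> v = hclass F (mapply U ` (integers nv F \<times> integers nv F))"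
proof -
  obtain u w where uw: "u \<in> F \<times> F" "w \<in> F \<times> F" "fst u * snd w - snd u * fst w \<noteq> 0"
    and v: "v = hclass F (lat_span nv F u w)"
    using assms unfolding bt_vertex_def is_lattice_def by blast
  have "gl2 F (basis_mat u w)"
    using uw by (cases u, cases w) (auto simp: gl2_def basis_mat_def mult.commute)
  moreover have "v = hclass F (mapply (basis_mat u w) ` (integers nv F \<times> integers nv F))"
    using v by (simp add: lat_span_eq_image)
  ultimately show ?thesis
    by blast
qed

lemma pact_hclass_imp_matrix:
  assumes F: "subfield F" and g: "g \<in> pgl2 F" and eq: "pact g (hclass F L) = hclass F L'"
  shows "\<exists>M\<in>g. mapply M ` L = L'"
proof -
  obtain N where N: "g = pgl_class F N"
    using g unfolding pgl2_def by blast
  have "L = vscale 1 ` L"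
    by (simp add: vscale_def)
  then have "L \<in> hclass F L"
    unfolding hclass_def using subfield_1[OF F] by (intro CollectI exI[of _ 1]) simp
  moreover have "N \<in> g"
    unfolding N by (rule pgl_class_self[OF F])
  ultimately have "mapply N ` L \<in> pact g (hclass F L)"
    unfolding pact_def by blast
  then have "mapply N ` L \<in> hclass F L'"
    using eq by simp
  then obtain l where l: "l \<in> F" "l \<noteq> 0" "mapply N ` L = vscale l ` L'"
    unfolding hclass_def by blast
  define M where "M = msmul (inverse l) N"
  have "M \<in> g"
    unfolding N M_def pgl_class_def using l subfield_inverse[OF F] by auto
  have "vscale (inverse l) (vscale l x) = x" for x
    using l(2) by (cases x) (simp add: vscale_def field_simps)
  then have "vscale (inverse l) ` vscale l ` L' = L'"
    by (simp add: image_image)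
  moreover have "mapply M ` L = vscale (inverse l) ` mapply N ` L"
    unfolding M_def by (simp add: image_image mapply_msmul)
  ultimately have "mapply M ` L = L'"
    using l(3) by simp
  then show ?thesis
    using \<open>M \<in> g\<close> by blast
qed

lemma (in nonarch) pact_hclass_imp_GL2_int_factor:
  assumes F: "subfield F" and "g \<in> pgl2 F" "gl2 F U'"
    and "pact g (hclass F (mapply U ` (integers nv F \<times> integers nv F)))
      = hclass F (mapply U' ` (integers nv F \<times> integers nv F))"
  shows "\<exists>M K. M \<in> g \<and> K \<in> GL2_int nv F \<and> mmul M U = mmul U' K"
proof -
  let ?O2 = "integers nv F \<times> integers nv F"
  obtain M where M: "M \<in> g" "mapply M ` mapply U ` ?O2 = mapply U' ` ?O2"
    using pact_hclass_imp_matrix[OF F assms(2,4)] by blast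
  then have "mapply (mmul M U) ` ?O2 = mapply U' ` ?O2"
    by (simp add: image_image mapply_mmul)
  moreover have "mdet U' \<noteq> 0"
    using assms(3) by (simp add: gl2_def)
  ultimately obtain K where "K \<in> GL2_int nv F" "mmul M U = mmul U' K"
    using lattice_eq_imp_GL2_int[OF F] by blast
  then show ?thesis
    using M(1) by blast
qed

lemma pvec_in_F: "subfield F \<Longrightarrow> a \<in> P1 F \<Longrightarrow> pvec a \<in> F \<times> F"
  unfolding P1_def by (auto simp: subfield_0 subfield_1)

lemma pvec_det_neq_0: "a \<noteq> b \<Longrightarrow> fst (pvec a) * snd (pvec b) - snd (pvec a) * fst (pvec b) \<noteq> 0"
  by (cases a; cases b) auto

lemma on_geod_bt_vertex:
  assumes F: "subfield F" and "a \<in> P1 F" "b \<in> P1 F" "a \<noteq> b" "on_geod nv F a b v"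
  shows "bt_vertex nv F v"
proof -
  obtain \<alpha> \<beta> where \<alpha>\<beta>: "\<alpha> \<in> F" "\<alpha> \<noteq> 0" "\<beta> \<in> F" "\<beta> \<noteq> 0"
    and v: "v = hclass F (lat_span nv F (vscale \<alpha> (pvec a)) (vscale \<beta> (pvec b)))"
    using assms(5) unfolding on_geod_def by blast
  have "fst (vscale \<alpha> (pvec a)) * snd (vscale \<beta> (pvec b)) - snd (vscale \<alpha> (pvec a)) * fst (vscale \<beta> (pvec b))
      = \<alpha> * \<beta> * (fst (pvec a) * snd (pvec b) - snd (pvec a) * fst (pvec b))"
    by (simp add: vscale_def algebra_simps)
  then have det: "fst (vscale \<alpha> (pvec a)) * snd (vscale \<beta> (pvec b))
      - snd (vscale \<alpha> (pvec a)) * fst (vscale \<beta> (pvec b)) \<noteq> 0"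
    using \<alpha>\<beta> pvec_det_neq_0[OF assms(4)] by simp
  have "vscale \<alpha> (pvec a) \<in> F \<times> F"
    using \<alpha>\<beta>(1) pvec_in_F[OF F assms(2)] by (cases "pvec a") (simp add: vscale_def subfield_mult F)
  moreover have "vscale \<beta> (pvec b) \<in> F \<times> F"
    using \<alpha>\<beta>(3) pvec_in_F[OF F assms(3)] by (cases "pvec b") (simp add: vscale_def subfield_mult F)
  ultimately have "is_lattice nv F (lat_span nv F (vscale \<alpha> (pvec a)) (vscale \<beta> (pvec b)))"
    unfolding is_lattice_def using det
    by (intro exI[of _ "vscale \<alpha> (pvec a)"] exI[of _ "vscale \<beta> (pvec b)"]) simp
  then show ?thesis
    unfolding bt_vertex_def v by blast
qed

lemma polysimplex_factor_vertices:
  assumes "polysimplex nv S F Lp \<sigma>" "s \<in> S" "Lp s \<noteq> {}" "Lp s \<subseteq> P1 (F s)" "subfield (F s)"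
  shows "finite (\<sigma> s) \<and> \<sigma> s \<noteq> {} \<and> (\<forall>v\<in>\<sigma> s. bt_vertex nv (F s) v)"
proof -
  have "(\<exists>v. v \<in> tree_verts nv (F s) (Lp s) \<and> \<sigma> s = {v})
      \<or> (\<exists>v w. tree_edge nv (F s) (Lp s) v w \<and> \<sigma> s = {v, w})"
    using assms(1-3) unfolding polysimplex_def by blast
  then show ?thesis
  proof
    assume "\<exists>v. v \<in> tree_verts nv (F s) (Lp s) \<and> \<sigma> s = {v}"
    then obtain v a b where "\<sigma> s = {v}" "a \<in> Lp s" "b \<in> Lp s" "a \<noteq> b" "on_geod nv (F s) a b v"
      unfolding tree_verts_def by blast
    moreover from this have "bt_vertex nv (F s) v"
      using on_geod_bt_vertex[OF assms(5), of a b nv v] assms(4) by blast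
    ultimately show ?thesis
      by simp
  next
    assume "\<exists>v w. tree_edge nv (F s) (Lp s) v w \<and> \<sigma> s = {v, w}"
    then show ?thesis
      unfolding tree_edge_def bt_adjacent_def by auto
  qed
qed

section \<open>Orbits of sequences stabilizing a polysimplex\<close>

context embedded_local_field
begin

lemma pgl2_seq_moving_vertex_tendsto:
  fixes \<delta> :: "nat \<Rightarrow> 'c mat2 set"
  assumes w: "w \<notin> F" and "bt_vertex nv F v" "bt_vertex nv F v'"
    and \<delta>: "\<And>j. \<delta> j \<in> pgl2 F" "\<And>j. pact (\<delta> j) v = v'"
  shows "\<exists>r t. strict_mono r \<and> t \<notin> F \<and> p1_tendsto nv (\<lambda>j. pmob (\<delta> (r j)) (Some w)) (Some t)"
proof -
  let ?O2 = "integers nv F \<times> integers nv F"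
  obtain U U' where U: "gl2 F U" "v = hclass F (mapply U ` ?O2)"
    and U': "gl2 F U'" "v' = hclass F (mapply U' ` ?O2)"
    using bt_vertex_imp_gl2_image[OF assms(2)] bt_vertex_imp_gl2_image[OF assms(3)] by blast
  have "\<exists>M K. M \<in> \<delta> j \<and> K \<in> GL2_int nv F \<and> mmul M U = mmul U' K" for j
    using pact_hclass_imp_GL2_int_factor[OF F_subfield \<delta>(1) U'(1)] \<delta>(2)[of j] U(2) U'(2) by simp
  then obtain M K where MK: "\<And>j. M j \<in> \<delta> j" "\<And>j. K j \<in> GL2_int nv F"
    "\<And>j. mmul (M j) U = mmul U' (K j)"
    by metis
  obtain r K0 where r: "strict_mono r" "K0 \<in> GL2_int nv F" "mlim (\<lambda>j. K (r j)) K0"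
    using GL2_int_seq_compact[of K] MK(2) by blast
  \<comment> \<open>Since \<open>M j U = U' (K j)\<close>, the matrix \<open>M j\<close> is \<open>N (K j)\<close> up to the scalar \<open>mdet U\<close>.\<close>
  define N where "N K = mmul (mmul U' K) (madj U)" for K
  have "gl2 F (N K0)"
    unfolding N_def using U(1) U'(1) GL2_int_gl2[OF r(2)] F_subfield by (intro gl2_mmul gl2_madj)
  then obtain t where t: "mob (N K0) (Some w) = Some t" "t \<notin> F"
    using mob_Some_notin[OF F_subfield _ w] by blast
  have "mdet U \<noteq> 0"
    using U(1) by (simp add: gl2_def)
  then have "pmob (\<delta> j) (Some w) = mob (N (K j)) (Some w)" for j
    using pmob_mem[OF \<delta>(1) MK(1)] mob_msmul[of "mdet U" "M j"]
    by (simp add: N_def msmul_mdet_eq_mmul_madj MK(3))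
  moreover have "mlim (\<lambda>j. N (K (r j))) (N K0)"
    unfolding N_def using r(3) by (intro mlim_mmul mlim_const)
  ultimately have "p1_tendsto nv (\<lambda>j. pmob (\<delta> (r j)) (Some w)) (Some t)"
    using mob_tendsto[OF _ t(1)] by simp
  then show ?thesis
    using r(1) t(2) by blast
qed

text \<open>An element stabilizing an edge may swap its ends; hence the passage to a subsequence along
  which a fixed vertex has a constant image.\<close>

lemma pgl2_seq_stabilizing_vertices_tendsto:
  fixes \<delta> :: "nat \<Rightarrow> 'c mat2 set"
  assumes "w \<notin> F" "finite V" "V \<noteq> {}" "\<forall>v\<in>V. bt_vertex nv F v"
    and \<delta>: "\<And>j. \<delta> j \<in> pgl2 F" "\<And>j. pact (\<delta> j) ` V = V"
  shows "\<exists>r t. strict_mono r \<and> t \<notin> F \<and> p1_tendsto nv (\<lambda>j. pmob (\<delta> (r j)) (Some w)) (Some t)"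
proof -
  obtain v where "v \<in> V"
    using assms(3) by blast
  then have V: "range (\<lambda>j. pact (\<delta> j) v) \<subseteq> V"
    using \<delta>(2) by blast
  then have fin: "finite (range (\<lambda>j. pact (\<delta> j) v))"
    using assms(2) by (rule finite_subset)
  obtain r0 :: "nat \<Rightarrow> nat" and v' where r0: "strict_mono r0" "\<forall>j. pact (\<delta> (r0 j)) v = v'"
    using strict_mono_subseq_const[OF fin] by blast
  then have "v' = pact (\<delta> (r0 0)) v"
    by simp
  then have "v' \<in> V"
    using V by blast
  then obtain r t where "strict_mono r" "t \<notin> F"
    "p1_tendsto nv (\<lambda>j. pmob (\<delta> (r0 (r j))) (Some w)) (Some t)"
    using pgl2_seq_moving_vertex_tendsto[of w v v' "\<lambda>j. \<delta> (r0 j)"] assms(1,4) \<delta>(1) \<open>v \<in> V\<close> r0(2)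
    by blast
  then show ?thesis
    using strict_mono_compose[OF r0(1)] by blast
qed

lemma pgl2_seq_base_point:
  fixes \<delta> :: "nat \<Rightarrow> 'c mat2 set"
  assumes AC: "\<forall>f::'c poly. 0 < degree f \<longrightarrow> (\<exists>z. poly f z = 0)"
    and Ls: "Ls \<subseteq> P1 F" and \<delta>: "\<And>j. \<delta> j \<in> pgl2 F"
    and V: "Ls \<noteq> {} \<Longrightarrow> finite V \<and> V \<noteq> {} \<and> (\<forall>v\<in>V. bt_vertex nv F v) \<and> (\<forall>j. pact (\<delta> j) ` V = V)"
  shows "\<exists>y. \<forall>r :: nat \<Rightarrow> nat. strict_mono r \<longrightarrow>
    (\<exists>r' l. strict_mono r' \<and> l \<notin> Ls \<and> p1_tendsto nv (\<lambda>j. pmob (\<delta> (r (r' j))) y) l)"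
proof (cases "Ls = {}")
  case True
  have "\<exists>r' l. strict_mono r' \<and> l \<notin> Ls \<and> p1_tendsto nv (\<lambda>j. pmob (\<delta> (r (r' j))) None) l"
    for r :: "nat \<Rightarrow> nat"
  proof -
    have "pmob (\<delta> (r j)) None \<in> P1 F" for j
      using pmob_P1[OF F_subfield \<delta>] by (simp add: P1_def)
    then show ?thesis
      using P1_seq_compact[of "\<lambda>j. pmob (\<delta> (r j)) None"] True by blast
  qed
  then show ?thesis
    by blast
next
  case False
  obtain w where w: "w \<notin> F"
    using exists_notin[OF AC] by blast
  have "\<exists>r' l. strict_mono r' \<and> l \<notin> Ls \<and> p1_tendsto nv (\<lambda>j. pmob (\<delta> (r (r' j))) (Some w)) l"
    for r :: "nat \<Rightarrow> nat"
  proof -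
    obtain r' t where "strict_mono r'" "t \<notin> F"
      "p1_tendsto nv (\<lambda>j. pmob (\<delta> (r (r' j))) (Some w)) (Some t)"
      using pgl2_seq_stabilizing_vertices_tendsto[OF w, of V "\<lambda>j. \<delta> (r j)"] V[OF False] \<delta> by blast
    moreover have "Some t \<notin> Ls"
      using Ls \<open>t \<notin> F\<close> by (auto simp: P1_def)
    ultimately show ?thesis
      by blast
  qed
  then show ?thesis
    by blast
qed

end

lemma limsetI:
  assumes "inj \<gamma>" "range \<gamma> \<subseteq> \<Gamma>" "\<And>s. s \<in> S \<Longrightarrow> p1_tendsto nv (\<lambda>j. pmob (\<gamma> j s) (y s)) (x s)"
    "\<And>s. s \<notin> S \<Longrightarrow> x s = None"
  shows "x \<in> limset nv S \<Gamma>"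
  using assms unfolding limset_def by blast

lemma stabilizer_seq_base_points:
  fixes nv :: "'c::field \<Rightarrow> real" and \<gamma> :: "nat \<Rightarrow> 's \<Rightarrow> 'c mat2 set"
  assumes "is_C nv p" "\<forall>s\<in>S. local_subfield nv (F s)" "pgl_subgroup S F \<Gamma>"
    and "semisimple_plectic_with nv S F \<Gamma> Lp" "polysimplex nv S F Lp \<sigma>"
    and "range \<gamma> \<subseteq> stabilizer S \<Gamma> Lp \<sigma>"
  shows "\<exists>y. \<forall>s\<in>S. \<forall>r :: nat \<Rightarrow> nat. strict_mono r \<longrightarrow>
    (\<exists>r' l. strict_mono r' \<and> l \<notin> Lp s \<and> p1_tendsto nv (\<lambda>j. pmob (\<gamma> (r (r' j)) s) (y s)) l)"
proof -
  have "\<exists>y. \<forall>r :: nat \<Rightarrow> nat. strict_mono r \<longrightarrow>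
    (\<exists>r' l. strict_mono r' \<and> l \<notin> Lp s \<and> p1_tendsto nv (\<lambda>j. pmob (\<gamma> (r (r' j)) s) y) l)"
    if s: "s \<in> S" for s
  proof -
    interpret embedded_local_field nv "F s"
      using assms(1,2) s by unfold_locales (simp_all add: is_C_def)
    show ?thesis
    proof (rule pgl2_seq_base_point)
      show "\<forall>f::'c poly. 0 < degree f \<longrightarrow> (\<exists>z. poly f z = 0)"
        using assms(1) by (simp add: is_C_def)
      show "Lp s \<subseteq> P1 (F s)"
        using assms(4) s by (simp add: semisimple_plectic_with_def)
      show "\<gamma> j s \<in> pgl2 (F s)" for j
      proof -
        have "\<gamma> j \<in> \<Gamma>"
          using assms(6) unfolding stabilizer_def by blast
        then show ?thesis
          using assms(3) s by (auto simp: pgl_subgroup_def pglS_def)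
      qed
      show "finite (\<sigma> s) \<and> \<sigma> s \<noteq> {} \<and> (\<forall>v\<in>\<sigma> s. bt_vertex nv (F s) v)
          \<and> (\<forall>j. pact (\<gamma> j s) ` \<sigma> s = \<sigma> s)" if "Lp s \<noteq> {}"
        using polysimplex_factor_vertices[OF assms(5) s that \<open>Lp s \<subseteq> P1 (F s)\<close> F_subfield] assms(6) s that
        by (auto simp: stabilizer_def)
    qed
  qed
  then have "\<forall>s\<in>S. \<exists>y. \<forall>r :: nat \<Rightarrow> nat. strict_mono r \<longrightarrow>
    (\<exists>r' l. strict_mono r' \<and> l \<notin> Lp s \<and> p1_tendsto nv (\<lambda>j. pmob (\<gamma> (r (r' j)) s) y) l)"
    by blast
  from bchoice[OF this] show ?thesis .
qed

theorem lemma2p18: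
  fixes nv :: "'c::field \<Rightarrow> real" and p :: nat and S :: "'s set"
    and F :: "'s \<Rightarrow> 'c set" and \<Gamma> :: "('s \<Rightarrow> 'c mat2 set) set"
    and Lp :: "'s \<Rightarrow> 'c option set" and \<sigma> :: "'s \<Rightarrow> ('c \<times> 'c) set set set"
  assumes "is_C nv p"
    and "finite S" and "S \<noteq> {}"
    and "\<forall>s\<in>S. local_subfield nv (F s)"
    and "pgl_subgroup S F \<Gamma>"
    and "semisimple_plectic_with nv S F \<Gamma> Lp"
    and "polysimplex nv S F Lp \<sigma>"
  shows "finite (stabilizer S \<Gamma> Lp \<sigma>)"
proof (rule ccontr)
  assume "infinite (stabilizer S \<Gamma> Lp \<sigma>)"
  then obtain \<gamma> :: "nat \<Rightarrow> 's \<Rightarrow> 'c mat2 set" where \<gamma>: "inj \<gamma>" "range \<gamma> \<subseteq> stabilizer S \<Gamma> Lp \<sigma>"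
    using infinite_countable_subset by blast
  obtain y where y: "\<forall>s\<in>S. \<forall>r :: nat \<Rightarrow> nat. strict_mono r \<longrightarrow>
      (\<exists>r' l. strict_mono r' \<and> l \<notin> Lp s \<and> p1_tendsto nv (\<lambda>j. pmob (\<gamma> (r (r' j)) s) (y s)) l)"
    using stabilizer_seq_base_points[OF assms(1,4-7) \<gamma>(2)] by blast
  obtain r x where r: "strict_mono r"
    and x: "\<forall>s\<in>S. x s \<notin> Lp s \<and> p1_tendsto nv (\<lambda>j. pmob (\<gamma> (r j) s) (y s)) (x s)"
    using p1_tendsto_subseq_finite_family[OF assms(2), where L = Lp and Z = "\<lambda>s j. pmob (\<gamma> j s) (y s)"] y
    by blast
  have "(\<lambda>s. if s \<in> S then x s else None) \<in> limset nv S \<Gamma>"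
  proof (rule limsetI)
    show "inj (\<gamma> \<circ> r)"
      using \<gamma>(1) r(1) by (simp add: inj_compose strict_mono_imp_inj_on)
    show "range (\<gamma> \<circ> r) \<subseteq> \<Gamma>"
      using \<gamma>(2) by (auto simp: stabilizer_def)
  qed (use x in auto)
  then show False
    using assms(6) x unfolding semisimple_plectic_with_def by auto
qed

end
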